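(* Let $\sigma_{\mathbf{X},1},\sigma_{\mathbf{X},2},\sigma_{\mathbf{K},1},\sigma_{\mathbf{K},2}\ge0$, let $\mathbf{I}$ be the $p\times p$ identity matrix, $\delta$ the Kronecker symbol, and consider matrices $\mathbf{X},\mathbf{W}\in\mathbb{R}_{>0}^{p\times m}$ and $\mathbf{K},\mathbf{V}\in\mathbb{R}_{>0}^{n\times p}$. Consider $$F(\mathbf{X}):=\frac{\sigma_{\mathbf{X},1}}{2}\|\mathbf{I}-\mathbf{X}\mathbf{W}^\intercal\|_F^2+\frac{\sigma_{\mathbf{X},2}}{2}\|\mathbf{W}-\mathbf{X}\|_F^2=:G(\mathbf{W}),$$ $$H(\mathbf{K}):=\frac{\sigma_{\mathbf{K},1}}{2}\|\mathbf{I}-\mathbf{V}^\intercal\mathbf{K}\|_F^2+\frac{\sigma_{\mathbf{K},2}}{2}\|\mathbf{V}-\mathbf{K}\|_F^2=:J(\mathbf{V}),$$ where $F$ is viewed as a function of $\mathbf{X}$ ($\mathbf{W}$ fixed), $G$ as a function of $\mathbf{W}$ ($\mathbf{X}$ fixed), $H$ as a function of $\mathbf{K}$ ($\mathbf{V}$ fixed) and $J$ as a function of $\mathbf{V}$ ($\mathbf{K}$ fixed). Then $$Q_F(\mathbf{X},\mathbf{A}):=\frac{\sigma_{\mathbf{X},1}}{2}\sum_{k=1}^p\sum_{\ell=1}^p\frac{1}{(\mathbf{A}\mathbf{W}^\intercal)_{k\ell}}\sum_{j=1}^mA_{kj}W_{\ell j}\Big(\delta_{k\ell}-\frac{X_{kj}}{A_{kj}}(\mathbf{A}\mathbf{W}^\intercal)_{k\ell}\Big)^2+\frac{\sigma_{\mathbf{X},2}}{2}\|\mathbf{W}-\mathbf{X}\|_F^2,$$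 $$Q_G(\mathbf{W},\mathbf{A}):=\frac{\sigma_{\mathbf{X},1}}{2}\sum_{k=1}^p\sum_{\ell=1}^p\frac{1}{(\mathbf{X}\mathbf{A}^\intercal)_{k\ell}}\sum_{j=1}^mX_{kj}A_{\ell j}\Big(\delta_{k\ell}-\frac{W_{\ell j}}{A_{\ell j}}(\mathbf{X}\mathbf{A}^\intercal)_{k\ell}\Big)^2+\frac{\sigma_{\mathbf{X},2}}{2}\|\mathbf{W}-\mathbf{X}\|_F^2,$$ $$Q_H(\mathbf{K},\mathbf{A}):=\frac{\sigma_{\mathbf{K},1}}{2}\sum_{k=1}^p\sum_{\ell=1}^p\frac{1}{(\mathbf{V}^\intercal\mathbf{A})_{k\ell}}\sum_{i=1}^nV_{ik}A_{i\ell}\Big(\delta_{k\ell}-\frac{K_{i\ell}}{A_{i\ell}}(\mathbf{V}^\intercal\mathbf{A})_{k\ell}\Big)^2+\frac{\sigma_{\mathbf{K},2}}{2}\|\mathbf{V}-\mathbf{K}\|_F^2,$$ $$Q_J(\mathbf{V},\mathbf{A}):=\frac{\sigma_{\mathbf{K},1}}{2}\sum_{k=1}^p\sum_{\ell=1}^p\frac{1}{(\mathbf{A}^\intercal\mathbf{K})_{k\ell}}\sum_{i=1}^nA_{ik}K_{i\ell}\Big(\delta_{k\ell}-\frac{V_{ik}}{A_{ik}}(\mathbf{A}^\intercal\mathbf{K})_{k\ell}\Big)^2+\frac{\sigma_{\mathbf{K},2}}{2}\|\mathbf{V}-\mathbf{K}\|_F^2$$ define separable and convex surrogate functionals for $F$,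 $G$, $H$ and $J$, respectively.
   Context: The auxiliary matrices $\mathbf{A}$ have strictly positive entries (of the same size as the first argument). For an open set $\Omega$ and a function $F$ on $\Omega$, a map $Q_F:\Omega\times\Omega\to\mathbb{R}$ is a surrogate functional for $F$ if $Q_F(\mathbf{x},\mathbf{a})\ge F(\mathbf{x})$ for all $\mathbf{x},\mathbf{a}$ and $Q_F(\mathbf{x},\mathbf{x})=F(\mathbf{x})$ for all $\mathbf{x}$. A surrogate is separable if $Q_F(\mathbf{x},\mathbf{a})=\sum_i g_i(x_i,\mathbf{a})$ for some functions $g_i$ (matrix entries playing the role of coordinates). Convexity refers to the first argument. *)

theory Defs
  imports "HOL-Analysis.Analysis"
begin

text \<open>Matrices are rendered as \<open>real^'c^'r\<close> (rows indexed by 'r, columns by 'c),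
  with finite index types standing for arbitrary fixed dimensions.\<close>

definition pos_mat :: "(real^'c^'r) set" where
  "pos_mat = {X. \<forall>i j. X $ i $ j > 0}"

definition frob_norm :: "real^'c^'r \<Rightarrow> real" where
  "frob_norm X = sqrt (\<Sum>i\<in>UNIV. \<Sum>j\<in>UNIV. (X $ i $ j)^2)"

definition kdelta :: "'a \<Rightarrow> 'a \<Rightarrow> real" where
  "kdelta k l = (if k = l then 1 else 0)"

definition is_surrogate :: "'x set \<Rightarrow> ('x \<Rightarrow> real) \<Rightarrow> ('x \<Rightarrow> 'x \<Rightarrow> real) \<Rightarrow> bool" where
  "is_surrogate \<Omega> F Q \<longleftrightarrow> (\<forall>x\<in>\<Omega>. \<forall>a\<in>\<Omega>. Q x a \<ge> F x) \<and> (\<forall>x\<in>\<Omega>. Q x x = F x)"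

definition separable_surrogate ::
  "(real^'c^'r) set \<Rightarrow> (real^'c^'r \<Rightarrow> real^'c^'r \<Rightarrow> real) \<Rightarrow> bool" where
  "separable_surrogate \<Omega> Q \<longleftrightarrow>
     (\<exists>g :: 'r \<Rightarrow> 'c \<Rightarrow> real \<Rightarrow> real^'c^'r \<Rightarrow> real.
        \<forall>x\<in>\<Omega>. \<forall>a\<in>\<Omega>. Q x a = (\<Sum>i\<in>UNIV. \<Sum>j\<in>UNIV. g i j (x $ i $ j) a))"

definition convex_surrogate :: "'x::real_vector set \<Rightarrow> ('x \<Rightarrow> 'x \<Rightarrow> real) \<Rightarrow> bool" where
  "convex_surrogate \<Omega> Q \<longleftrightarrow> (\<forall>a\<in>\<Omega>. convex_on \<Omega> (\<lambda>x. Q x a))"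

definition sep_convex_surrogate ::
  "(real^'c^'r) set \<Rightarrow> (real^'c^'r \<Rightarrow> real) \<Rightarrow> (real^'c^'r \<Rightarrow> real^'c^'r \<Rightarrow> real) \<Rightarrow> bool" where
  "sep_convex_surrogate \<Omega> F Q \<longleftrightarrow>
     is_surrogate \<Omega> F Q \<and> separable_surrogate \<Omega> Q \<and> convex_surrogate \<Omega> Q"

definition F_fun :: "real \<Rightarrow> real \<Rightarrow> real^'m^'p \<Rightarrow> real^'m^'p \<Rightarrow> real" where
  "F_fun s1 s2 W X = s1/2 * (frob_norm (mat 1 - X ** transpose W))^2 + s2/2 * (frob_norm (W - X))^2"

definition G_fun :: "real \<Rightarrow> real \<Rightarrow> real^'m^'p \<Rightarrow> real^'m^'p \<Rightarrow> real" where
  "G_fun s1 s2 X W = s1/2 * (frob_norm (mat 1 - X ** transpose W))^2 + s2/2 * (frob_norm (W - X))^2"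

definition H_fun :: "real \<Rightarrow> real \<Rightarrow> real^'p^'n \<Rightarrow> real^'p^'n \<Rightarrow> real" where
  "H_fun s1 s2 V K = s1/2 * (frob_norm (mat 1 - transpose V ** K))^2 + s2/2 * (frob_norm (V - K))^2"

definition J_fun :: "real \<Rightarrow> real \<Rightarrow> real^'p^'n \<Rightarrow> real^'p^'n \<Rightarrow> real" where
  "J_fun s1 s2 K V = s1/2 * (frob_norm (mat 1 - transpose V ** K))^2 + s2/2 * (frob_norm (V - K))^2"

definition Q_F :: "real \<Rightarrow> real \<Rightarrow> real^'m^'p \<Rightarrow> real^'m^'p \<Rightarrow> real^'m^'p \<Rightarrow> real" where
  "Q_F s1 s2 W X A =
     s1/2 * (\<Sum>k\<in>UNIV. \<Sum>l\<in>UNIV. 1 / (A ** transpose W) $ k $ l *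
        (\<Sum>j\<in>UNIV. A $ k $ j * W $ l $ j *
           (kdelta k l - X $ k $ j / A $ k $ j * (A ** transpose W) $ k $ l)^2))
     + s2/2 * (frob_norm (W - X))^2"

definition Q_G :: "real \<Rightarrow> real \<Rightarrow> real^'m^'p \<Rightarrow> real^'m^'p \<Rightarrow> real^'m^'p \<Rightarrow> real" where
  "Q_G s1 s2 X W A =
     s1/2 * (\<Sum>k\<in>UNIV. \<Sum>l\<in>UNIV. 1 / (X ** transpose A) $ k $ l *
        (\<Sum>j\<in>UNIV. X $ k $ j * A $ l $ j *
           (kdelta k l - W $ l $ j / A $ l $ j * (X ** transpose A) $ k $ l)^2))
     + s2/2 * (frob_norm (W - X))^2"

definition Q_H :: "real \<Rightarrow> real \<Rightarrow> real^'p^'n \<Rightarrow> real^'p^'n \<Rightarrow> real^'p^'n \<Rightarrow> real" where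
  "Q_H s1 s2 V K A =
     s1/2 * (\<Sum>k\<in>UNIV. \<Sum>l\<in>UNIV. 1 / (transpose V ** A) $ k $ l *
        (\<Sum>i\<in>UNIV. V $ i $ k * A $ i $ l *
           (kdelta k l - K $ i $ l / A $ i $ l * (transpose V ** A) $ k $ l)^2))
     + s2/2 * (frob_norm (V - K))^2"

definition Q_J :: "real \<Rightarrow> real \<Rightarrow> real^'p^'n \<Rightarrow> real^'p^'n \<Rightarrow> real^'p^'n \<Rightarrow> real" where
  "Q_J s1 s2 K V A =
     s1/2 * (\<Sum>k\<in>UNIV. \<Sum>l\<in>UNIV. 1 / (transpose A ** K) $ k $ l *
        (\<Sum>i\<in>UNIV. A $ i $ k * K $ i $ l *
           (kdelta k l - V $ i $ k / A $ i $ k * (transpose A ** K) $ k $ l)^2))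
     + s2/2 * (frob_norm (V - K))^2"

end

theory Submission
  imports Defs
begin

text \<open>
  With \<open>c\<^sub>k\<^sub>l = (A W\<^sup>T)\<^sub>k\<^sub>l\<close>, the entry \<open>\<delta>\<^sub>k\<^sub>l - \<Sum>\<^sub>j X\<^sub>k\<^sub>j W\<^sub>l\<^sub>j\<close> of \<open>I - X W\<^sup>T\<close> is the convex
  combination of the numbers \<open>\<delta>\<^sub>k\<^sub>l - X\<^sub>k\<^sub>j c\<^sub>k\<^sub>l / A\<^sub>k\<^sub>j\<close> with weights \<open>A\<^sub>k\<^sub>j W\<^sub>l\<^sub>j / c\<^sub>k\<^sub>l\<close>.
  Jensen's inequality for the square gives \<open>F \<le> Q\<^sub>F\<close>, with equality at \<open>A = X\<close> where all
  these numbers coincide. Each summand of \<open>Q\<^sub>F\<close> is a convex quadratic in a single entry \<open>X\<^sub>k\<^sub>j\<close>.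
  The other three functionals are \<open>Q\<^sub>F\<close> in disguise: \<open>Q\<^sub>G\<close> is \<open>Q\<^sub>F\<close> with the roles of \<open>X\<close> and
  \<open>W\<close> exchanged (after swapping \<open>k\<close> and \<open>l\<close>), and \<open>Q\<^sub>H\<close>, \<open>Q\<^sub>J\<close> are \<open>Q\<^sub>G\<close>, \<open>Q\<^sub>F\<close> evaluated at
  transposed matrices; transposition is a linear bijection of positive matrices and
  preserves all three properties.
\<close>

lemma power2_diff_sum_le_weighted:
  fixes a b x :: "'j \<Rightarrow> real"
  assumes "finite S" "S \<noteq> {}" "\<And>j. j \<in> S \<Longrightarrow> a j > 0" "\<And>j. j \<in> S \<Longrightarrow> b j > 0"
    and c: "c = (\<Sum>j\<in>S. a j * b j)"
  shows "(d - (\<Sum>j\<in>S. x j * b j))^2 \<le> 1/c * (\<Sum>j\<in>S. a j * b j * (d - x j / a j * c)^2)"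
proof -
  have "c > 0" unfolding c using assms by (intro sum_pos) auto
  define w where "w j = a j * b j / c" for j
  define z where "z j = d - x j / a j * c" for j
  have w_nonneg: "w j \<ge> 0" if "j \<in> S" for j
    using assms(3,4)[OF that] \<open>c > 0\<close> by (simp add: w_def)
  have w_sum: "(\<Sum>j\<in>S. w j) = 1"
    using \<open>c > 0\<close> by (simp add: w_def c flip: sum_divide_distrib)
  have "w j * z j = w j * d - x j * b j" if "j \<in> S" for j
    using assms(3)[OF that] \<open>c > 0\<close> by (simp add: w_def z_def field_simps)
  then have "(\<Sum>j\<in>S. w j * z j) = (\<Sum>j\<in>S. w j * d - x j * b j)"
    by (rule sum.cong[OF refl])
  also have "\<dots> = d - (\<Sum>j\<in>S. x j * b j)"
    by (simp add: sum_subtractf w_sum flip: sum_distrib_right)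
  finally have "d - (\<Sum>j\<in>S. x j * b j) = (\<Sum>j\<in>S. w j *\<^sub>R z j)" by simp
  also have "(\<Sum>j\<in>S. w j *\<^sub>R z j)^2 \<le> (\<Sum>j\<in>S. w j * (z j)^2)"
    using convex_on_sum[OF assms(1,2) convex_power2 w_sum w_nonneg] by simp
  also have "\<dots> = 1/c * (\<Sum>j\<in>S. a j * b j * (d - x j / a j * c)^2)"
    by (simp add: w_def z_def sum_distrib_left)
  finally show ?thesis .
qed

lemma weighted_power2_sum_diag:
  fixes a b :: "'j \<Rightarrow> real"
  assumes "\<And>j. j \<in> S \<Longrightarrow> a j > 0" and c: "c = (\<Sum>j\<in>S. a j * b j)" "c \<noteq> 0"
  shows "1/c * (\<Sum>j\<in>S. a j * b j * (d - a j / a j * c)^2) = (d - c)^2"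
proof -
  have "(\<Sum>j\<in>S. a j * b j * (d - a j / a j * c)^2) = (\<Sum>j\<in>S. a j * b j * (d - c)^2)"
    using assms(1) by (intro sum.cong) auto
  also have "\<dots> = c * (d - c)^2" by (simp add: c(1) sum_distrib_right)
  finally show ?thesis using c(2) by simp
qed

lemma convex_on_linear_comp:
  assumes "linear L" "convex_on T f" "L ` S \<subseteq> T" "convex S"
  shows "convex_on S (\<lambda>x. f (L x))"
  unfolding convex_on_def
proof (intro conjI ballI allI impI)
  fix x y and u v :: real assume xy: "x \<in> S" "y \<in> S" and uv: "0 \<le> u" "0 \<le> v" "u + v = 1"
  have "L x \<in> T" "L y \<in> T" using xy assms(3) by auto
  then have "f (u *\<^sub>R L x + v *\<^sub>R L y) \<le> u * f (L x) + v * f (L y)"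
    using assms(2) uv unfolding convex_on_def by blast
  then show "f (L (u *\<^sub>R x + v *\<^sub>R y)) \<le> u * f (L x) + v * f (L y)"
    using assms(1) by (simp only: linear_add linear_scale)
qed fact

lemma convex_on_sum_fun:
  assumes "finite I" "convex S" "\<And>i. i \<in> I \<Longrightarrow> convex_on S (f i)"
  shows "convex_on S (\<lambda>x. \<Sum>i\<in>I. f i x)"
  using assms by (induction I rule: finite_induct) (auto simp: convex_on_const)

lemma convex_on_scaled_affine_power2:
  assumes "0 \<le> \<alpha>"
  shows "convex_on UNIV (\<lambda>t::real. \<alpha> * (u + \<beta> * t)^2)"
proof -
  have "convex_on UNIV (\<lambda>t::real. (u + \<beta> * t)^2)"
    unfolding convex_on_def
  proof (intro conjI convex_UNIV ballI allI impI)
    fix x y p q :: real assume pq: "0 \<le> p" "0 \<le> q" "p + q = 1"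
    have "u + \<beta> * (p *\<^sub>R x + q *\<^sub>R y) = p *\<^sub>R (u + \<beta> * x) + q *\<^sub>R (u + \<beta> * y)"
      using pq(3) by (simp add: algebra_simps flip: distrib_right)
    then show "(u + \<beta> * (p *\<^sub>R x + q *\<^sub>R y))^2 \<le> p * (u + \<beta> * x)^2 + q * (u + \<beta> * y)^2"
      using convex_power2 pq unfolding convex_on_def by simp
  qed
  then show ?thesis using assms by (rule convex_on_cmul[rotated])
qed

lemma convex_on_sum_entries:
  fixes g :: "'r::finite \<Rightarrow> 'c::finite \<Rightarrow> real \<Rightarrow> real"
  assumes "convex S" "\<And>i j. convex_on UNIV (g i j)"
  shows "convex_on S (\<lambda>x::real^'c^'r. \<Sum>i\<in>UNIV. \<Sum>j\<in>UNIV. g i j (x $ i $ j))"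
proof -
  have "convex_on S (\<lambda>x::real^'c^'r. g i j (x $ i $ j))" for i j
  proof (rule convex_on_linear_comp[OF _ assms(2)])
    show "linear (\<lambda>x::real^'c^'r. x $ i $ j)"
      by (intro linearI) simp_all
  qed (simp_all add: assms(1))
  then show ?thesis
    using assms(1) by (intro convex_on_sum_fun finite)
qed

lemma transpose_nth [simp]: "transpose A $ i $ j = A $ j $ i"
  by (simp add: transpose_def)

lemma transpose_diff: "transpose (A - B) = transpose A - transpose B"
  by (simp add: vec_eq_iff)

lemma linear_transpose: "linear (transpose :: real^'c^'r \<Rightarrow> real^'r^'c)"
  by (intro linearI) (simp_all add: vec_eq_iff)

lemma matrix_mult_transpose_nth: "(A ** transpose B) $ k $ l = (\<Sum>j\<in>UNIV. A $ k $ j * B $ l $ j)"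
  by (simp add: matrix_matrix_mult_def)

lemma frob_norm_power2: "(frob_norm X)^2 = (\<Sum>i\<in>UNIV. \<Sum>j\<in>UNIV. (X $ i $ j)^2)"
  by (simp add: frob_norm_def sum_nonneg)

lemma frob_norm_transpose: "frob_norm (transpose X) = frob_norm X"
  unfolding frob_norm_def by (simp, subst sum.swap, rule refl)

lemma frob_norm_minus_commute: "frob_norm (X - Y) = frob_norm (Y - X)"
  unfolding frob_norm_def by (simp add: power2_commute)

lemma transpose_in_pos_mat_iff [simp]: "transpose X \<in> pos_mat \<longleftrightarrow> X \<in> pos_mat"
  by (auto simp: pos_mat_def)

lemma convex_pos_mat: "convex (pos_mat :: (real^'c^'r) set)"
proof (rule convexI)
  fix X Y :: "real^'c^'r" and u v :: real
  assume XY: "X \<in> pos_mat" "Y \<in> pos_mat" and uv: "0 \<le> u" "0 \<le> v" "u + v = 1"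
  have "u * X $ i $ j + v * Y $ i $ j > 0" for i j
  proof -
    have "0 < X $ i $ j" "0 < Y $ i $ j" using XY by (auto simp: pos_mat_def)
    moreover have "0 < u \<or> 0 < v" using uv by linarith
    ultimately show ?thesis
      using uv by (auto intro: add_pos_nonneg add_nonneg_pos)
  qed
  then show "u *\<^sub>R X + v *\<^sub>R Y \<in> pos_mat"
    by (simp add: pos_mat_def)
qed

lemma pos_mat_mult_transpose_pos:
  assumes "A \<in> pos_mat" "B \<in> pos_mat"
  shows "(A ** transpose B) $ k $ l > 0"
  using assms by (auto simp: matrix_mult_transpose_nth pos_mat_def intro!: sum_pos)

definition Q_F_entry :: "real \<Rightarrow> real \<Rightarrow> real^'m^'p \<Rightarrow> real^'m^'p \<Rightarrow> 'p \<Rightarrow> 'm \<Rightarrow> real \<Rightarrow> real" where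
  "Q_F_entry s1 s2 W A k j t =
     s1/2 * (\<Sum>l\<in>UNIV. A $ k $ j * W $ l $ j / (A ** transpose W) $ k $ l *
        (kdelta k l - t / A $ k $ j * (A ** transpose W) $ k $ l)^2)
     + s2/2 * (W $ k $ j - t)^2"

lemma Q_F_eq_sum_Q_F_entry:
  "Q_F s1 s2 W X A = (\<Sum>k\<in>UNIV. \<Sum>j\<in>UNIV. Q_F_entry s1 s2 W A k j (X $ k $ j))"
proof -
  have "(\<Sum>l\<in>UNIV. 1 / (A ** transpose W) $ k $ l *
          (\<Sum>j\<in>UNIV. A $ k $ j * W $ l $ j * (kdelta k l - X $ k $ j / A $ k $ j * (A ** transpose W) $ k $ l)^2))
      = (\<Sum>j\<in>UNIV. \<Sum>l\<in>UNIV. A $ k $ j * W $ l $ j / (A ** transpose W) $ k $ l *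
          (kdelta k l - X $ k $ j / A $ k $ j * (A ** transpose W) $ k $ l)^2)" for k
    by (subst sum.swap) (simp add: sum_distrib_left)
  then show ?thesis
    by (simp add: Q_F_def Q_F_entry_def frob_norm_power2 sum.distrib sum_distrib_left)
qed

lemma convex_Q_F_entry:
  assumes "0 \<le> s1" "0 \<le> s2" "W \<in> pos_mat" "A \<in> pos_mat"
  shows "convex_on UNIV (Q_F_entry s1 s2 W A k j)"
proof -
  let ?c = "\<lambda>l. (A ** transpose W) $ k $ l"
  have "0 < A $ k $ j" "\<And>l. 0 < W $ l $ j" "\<And>l. 0 < ?c l"
    using assms(3,4) pos_mat_mult_transpose_pos by (auto simp: pos_mat_def)
  then have "convex_on UNIV (\<lambda>t. A $ k $ j * W $ l $ j / ?c l * (kdelta k l + (- ?c l / A $ k $ j) * t)^2)" for l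
    by (intro convex_on_scaled_affine_power2 divide_nonneg_pos mult_nonneg_nonneg) (simp_all add: less_imp_le)
  then have "convex_on UNIV (\<lambda>t. A $ k $ j * W $ l $ j / ?c l * (kdelta k l - t / A $ k $ j * ?c l)^2)" for l
    by (simp add: algebra_simps)
  then have "convex_on UNIV (\<lambda>t. \<Sum>l\<in>UNIV. A $ k $ j * W $ l $ j / ?c l * (kdelta k l - t / A $ k $ j * ?c l)^2)"
    by (intro convex_on_sum_fun) auto
  moreover have "convex_on UNIV (\<lambda>t. (W $ k $ j - t)^2)"
    using convex_on_scaled_affine_power2[of 1 "W $ k $ j" "-1"] by simp
  ultimately show ?thesis
    unfolding Q_F_entry_def using assms(1,2) by (intro convex_on_add convex_on_cmul) auto
qed

lemma F_fun_le_Q_F: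
  assumes "0 \<le> s1" "W \<in> pos_mat" "A \<in> pos_mat"
  shows "F_fun s1 s2 W X \<le> Q_F s1 s2 W X A"
proof -
  have "(kdelta k l - (\<Sum>j\<in>UNIV. X $ k $ j * W $ l $ j))^2
      \<le> 1 / (A ** transpose W) $ k $ l *
          (\<Sum>j\<in>UNIV. A $ k $ j * W $ l $ j * (kdelta k l - X $ k $ j / A $ k $ j * (A ** transpose W) $ k $ l)^2)"
    for k l
    using assms(2,3) by (intro power2_diff_sum_le_weighted) (auto simp: pos_mat_def matrix_mult_transpose_nth)
  moreover have "(mat 1 - X ** transpose W) $ k $ l = kdelta k l - (\<Sum>j\<in>UNIV. X $ k $ j * W $ l $ j)" for k l
    by (simp add: matrix_mult_transpose_nth mat_def kdelta_def)
  ultimately show ?thesis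
    unfolding F_fun_def Q_F_def frob_norm_power2 using assms(1)
    by (simp add: sum_mono mult_left_mono)
qed

lemma Q_F_diag:
  assumes "W \<in> pos_mat" "X \<in> pos_mat"
  shows "Q_F s1 s2 W X X = F_fun s1 s2 W X"
proof -
  have "1 / (X ** transpose W) $ k $ l *
          (\<Sum>j\<in>UNIV. X $ k $ j * W $ l $ j * (kdelta k l - X $ k $ j / X $ k $ j * (X ** transpose W) $ k $ l)^2)
      = (kdelta k l - (X ** transpose W) $ k $ l)^2" for k l
    using assms pos_mat_mult_transpose_pos[OF assms(2,1), THEN less_imp_neq, THEN not_sym]
    by (intro weighted_power2_sum_diag) (auto simp: pos_mat_def matrix_mult_transpose_nth)
  moreover have "(mat 1 - X ** transpose W) $ k $ l = kdelta k l - (X ** transpose W) $ k $ l" for k l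
    by (simp add: mat_def kdelta_def)
  ultimately show ?thesis
    unfolding F_fun_def Q_F_def frob_norm_power2 by simp
qed

lemma sep_convex_surrogate_Q_F:
  assumes "0 \<le> s1" "0 \<le> s2" "W \<in> pos_mat"
  shows "sep_convex_surrogate pos_mat (F_fun s1 s2 W) (Q_F s1 s2 W)"
  unfolding sep_convex_surrogate_def is_surrogate_def separable_surrogate_def convex_surrogate_def
proof (intro conjI ballI)
  show "\<exists>g. \<forall>X\<in>pos_mat. \<forall>A\<in>pos_mat. Q_F s1 s2 W X A = (\<Sum>k\<in>UNIV. \<Sum>j\<in>UNIV. g k j (X $ k $ j) A)"
    by (intro exI[of _ "\<lambda>k j t A. Q_F_entry s1 s2 W A k j t"]) (simp add: Q_F_eq_sum_Q_F_entry)
  show "convex_on pos_mat (\<lambda>X. Q_F s1 s2 W X A)" if "A \<in> pos_mat" for A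
    unfolding Q_F_eq_sum_Q_F_entry
    using assms that by (intro convex_on_sum_entries convex_pos_mat convex_Q_F_entry)
  show "F_fun s1 s2 W X \<le> Q_F s1 s2 W X A" if "A \<in> pos_mat" for X A
    using assms that by (intro F_fun_le_Q_F)
  show "Q_F s1 s2 W X X = F_fun s1 s2 W X" if "X \<in> pos_mat" for X
    using assms that by (intro Q_F_diag)
qed

lemma kdelta_commute: "kdelta k l = kdelta l k"
  by (simp add: kdelta_def)

lemma G_fun_eq_F_fun:
  fixes X :: "real^'m::finite^'p::finite"
  shows "G_fun s1 s2 X = F_fun s1 s2 X"
proof
  fix W :: "real^'m^'p"
  have "transpose (mat 1 - X ** transpose W) = mat 1 - W ** transpose X"
    by (simp add: transpose_diff matrix_transpose_mul)
  then show "G_fun s1 s2 X W = F_fun s1 s2 X W"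
    unfolding G_fun_def F_fun_def
    by (metis frob_norm_transpose frob_norm_minus_commute)
qed

lemma Q_G_eq_Q_F:
  fixes X :: "real^'m::finite^'p::finite"
  shows "Q_G s1 s2 X = Q_F s1 s2 X"
proof (intro ext)
  fix W A :: "real^'m^'p"
  define T where "T k l = 1 / (A ** transpose X) $ k $ l *
    (\<Sum>j\<in>UNIV. A $ k $ j * X $ l $ j * (kdelta k l - W $ k $ j / A $ k $ j * (A ** transpose X) $ k $ l)^2)"
    for k l
  have "(X ** transpose A) $ k $ l = (A ** transpose X) $ l $ k" for k l
    by (simp add: matrix_mult_transpose_nth mult.commute)
  then have "1 / (X ** transpose A) $ k $ l *
      (\<Sum>j\<in>UNIV. X $ k $ j * A $ l $ j * (kdelta k l - W $ l $ j / A $ l $ j * (X ** transpose A) $ k $ l)^2)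
    = T l k" for k l
    by (simp add: T_def kdelta_commute[of k l] mult.commute)
  then have "Q_G s1 s2 X W A = s1/2 * (\<Sum>k\<in>UNIV. \<Sum>l\<in>UNIV. T l k) + s2/2 * (frob_norm (X - W))^2"
    by (simp add: Q_G_def frob_norm_minus_commute[of W])
  also have "(\<Sum>k\<in>UNIV. \<Sum>l\<in>UNIV. T l k) = (\<Sum>k\<in>UNIV. \<Sum>l\<in>UNIV. T k l)"
    by (rule sum.swap)
  also have "s1/2 * (\<Sum>k\<in>UNIV. \<Sum>l\<in>UNIV. T k l) + s2/2 * (frob_norm (X - W))^2 = Q_F s1 s2 X W A"
    by (simp add: Q_F_def T_def)
  finally show "Q_G s1 s2 X W A = Q_F s1 s2 X W A" .
qed

lemma H_fun_eq_G_fun_transpose: "H_fun s1 s2 V = (\<lambda>K. G_fun s1 s2 (transpose V) (transpose K))"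
  by (simp add: fun_eq_iff H_fun_def G_fun_def frob_norm_transpose frob_norm_minus_commute[of _ V]
      flip: transpose_diff)

lemma Q_H_eq_Q_G_transpose: "Q_H s1 s2 V = (\<lambda>K A. Q_G s1 s2 (transpose V) (transpose K) (transpose A))"
  by (simp add: fun_eq_iff Q_H_def Q_G_def frob_norm_transpose frob_norm_minus_commute[of _ V]
      flip: transpose_diff)

lemma J_fun_eq_F_fun_transpose: "J_fun s1 s2 K = (\<lambda>V. F_fun s1 s2 (transpose K) (transpose V))"
  by (simp add: fun_eq_iff J_fun_def F_fun_def frob_norm_transpose frob_norm_minus_commute[of K]
      flip: transpose_diff)

lemma Q_J_eq_Q_F_transpose: "Q_J s1 s2 K = (\<lambda>V A. Q_F s1 s2 (transpose K) (transpose V) (transpose A))"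
  by (simp add: fun_eq_iff Q_J_def Q_F_def frob_norm_transpose frob_norm_minus_commute[of K]
      flip: transpose_diff)

lemma sep_convex_surrogate_transpose:
  fixes F :: "real^'c^'r \<Rightarrow> real" and Q :: "real^'c^'r \<Rightarrow> real^'c^'r \<Rightarrow> real"
  assumes "sep_convex_surrogate pos_mat F Q"
  shows "sep_convex_surrogate pos_mat (\<lambda>x. F (transpose x)) (\<lambda>x a. Q (transpose x) (transpose a))"
proof -
  have surr: "is_surrogate pos_mat F Q" and conv: "convex_surrogate pos_mat Q"
    and "separable_surrogate pos_mat Q"
    using assms by (simp_all add: sep_convex_surrogate_def)
  then obtain g where g: "\<And>x a. x \<in> pos_mat \<Longrightarrow> a \<in> pos_mat \<Longrightarrow>
      Q x a = (\<Sum>i\<in>UNIV. \<Sum>j\<in>UNIV. g i j (x $ i $ j) a)"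
    unfolding separable_surrogate_def by blast
  have "separable_surrogate pos_mat (\<lambda>x a. Q (transpose x) (transpose a))"
    unfolding separable_surrogate_def
  proof (intro exI[of _ "\<lambda>j i t a. g i j t (transpose a)"] ballI)
    fix x a :: "real^'r^'c" assume "x \<in> pos_mat" "a \<in> pos_mat"
    then show "Q (transpose x) (transpose a) = (\<Sum>j\<in>UNIV. \<Sum>i\<in>UNIV. g i j (x $ j $ i) (transpose a))"
      by (simp add: g) (rule sum.swap)
  qed
  moreover have "convex_surrogate pos_mat (\<lambda>x a. Q (transpose x) (transpose a))"
    unfolding convex_surrogate_def
  proof
    fix a :: "real^'r^'c" assume "a \<in> pos_mat"
    then have "convex_on pos_mat (\<lambda>x. Q x (transpose a))"
      using conv by (simp add: convex_surrogate_def)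
    then show "convex_on pos_mat (\<lambda>x. Q (transpose x) (transpose a))"
      by (rule convex_on_linear_comp[OF linear_transpose]) (auto simp: convex_pos_mat)
  qed
  moreover have "is_surrogate pos_mat (\<lambda>x. F (transpose x)) (\<lambda>x a. Q (transpose x) (transpose a))"
    using surr by (simp add: is_surrogate_def)
  ultimately show ?thesis
    by (simp add: sep_convex_surrogate_def)
qed

lemma sep_convex_surrogate_Q_G:
  assumes "0 \<le> s1" "0 \<le> s2" "X \<in> pos_mat"
  shows "sep_convex_surrogate pos_mat (G_fun s1 s2 X) (Q_G s1 s2 X)"
  unfolding G_fun_eq_F_fun Q_G_eq_Q_F using assms by (rule sep_convex_surrogate_Q_F)

theorem theorem4:
  fixes sX1 sX2 sK1 sK2 :: real
    and X W :: "real^'m::finite^'p::finite"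
    and K V :: "real^'p^'n::finite"
  assumes "sX1 \<ge> 0" "sX2 \<ge> 0" "sK1 \<ge> 0" "sK2 \<ge> 0"
    and "X \<in> pos_mat" "W \<in> pos_mat" "K \<in> pos_mat" "V \<in> pos_mat"
  shows "sep_convex_surrogate pos_mat (F_fun sX1 sX2 W) (Q_F sX1 sX2 W)
       \<and> sep_convex_surrogate pos_mat (G_fun sX1 sX2 X) (Q_G sX1 sX2 X)
       \<and> sep_convex_surrogate pos_mat (H_fun sK1 sK2 V) (Q_H sK1 sK2 V)
       \<and> sep_convex_surrogate pos_mat (J_fun sK1 sK2 K) (Q_J sK1 sK2 K)"
proof (intro conjI)
  show "sep_convex_surrogate pos_mat (F_fun sX1 sX2 W) (Q_F sX1 sX2 W)"
    using assms by (intro sep_convex_surrogate_Q_F)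
  show "sep_convex_surrogate pos_mat (G_fun sX1 sX2 X) (Q_G sX1 sX2 X)"
    using assms by (intro sep_convex_surrogate_Q_G)
  show "sep_convex_surrogate pos_mat (H_fun sK1 sK2 V) (Q_H sK1 sK2 V)"
    unfolding H_fun_eq_G_fun_transpose Q_H_eq_Q_G_transpose
    using assms by (intro sep_convex_surrogate_transpose sep_convex_surrogate_Q_G) simp_all
  show "sep_convex_surrogate pos_mat (J_fun sK1 sK2 K) (Q_J sK1 sK2 K)"
    unfolding J_fun_eq_F_fun_transpose Q_J_eq_Q_F_transpose
    using assms by (intro sep_convex_surrogate_transpose sep_convex_surrogate_Q_F) simp_all
qed

end
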